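(* Let $n\ge3$ and $m,k\ge1$ be integers, let $t,u\in\mathbb{Z}_n$ with $t^2\equiv u\pmod n$, and let $G$ be the set of all $m\times k$ matrices over $\mathbb{Z}_n$ with the operation $[a_{ij}]*[b_{ij}]=[(t a_{ij}+u b_{ij})\bmod n]$. If $t+u\equiv 1\pmod n$, then $(G,* )$ is an AG-band.
   Context: An AG-groupoid is a set with a binary operation satisfying $(a*b)*c=(c*b)*a$ for all $a,b,c$. An AG-band is an AG-groupoid in which every element is idempotent, i.e. $a*a=a$ for all $a$. *)

theory Defs
  imports Main
begin

definition ag_groupoid :: "'a set \<Rightarrow> ('a \<Rightarrow> 'a \<Rightarrow> 'a) \<Rightarrow> bool" where
  "ag_groupoid G f \<longleftrightarrow>
     (\<forall>a\<in>G. \<forall>b\<in>G. f a b \<in> G) \<and>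
     (\<forall>a\<in>G. \<forall>b\<in>G. \<forall>c\<in>G. f (f a b) c = f (f c b) a)"

definition ag_band :: "'a set \<Rightarrow> ('a \<Rightarrow> 'a \<Rightarrow> 'a) \<Rightarrow> bool" where
  "ag_band G f \<longleftrightarrow> ag_groupoid G f \<and> (\<forall>a\<in>G. f a a = a)"

text \<open>m x k matrices over Z_n: entries (representatives in {0..n-1}) indexed by
  i < m, j < k; extended by 0 outside the index range so that matrices are
  uniquely represented.\<close>
definition zmats :: "int \<Rightarrow> nat \<Rightarrow> nat \<Rightarrow> (nat \<Rightarrow> nat \<Rightarrow> int) set" where
  "zmats n m k = {A. (\<forall>i j. i < m \<and> j < k \<longrightarrow> 0 \<le> A i j \<and> A i j < n) \<and>
                      (\<forall>i j. \<not> (i < m \<and> j < k) \<longrightarrow> A i j = 0)}"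

definition zmat_op :: "int \<Rightarrow> nat \<Rightarrow> nat \<Rightarrow> int \<Rightarrow> int \<Rightarrow>
    (nat \<Rightarrow> nat \<Rightarrow> int) \<Rightarrow> (nat \<Rightarrow> nat \<Rightarrow> int) \<Rightarrow> (nat \<Rightarrow> nat \<Rightarrow> int)" where
  "zmat_op n m k t u A B = (\<lambda>i j. if i < m \<and> j < k then (t * A i j + u * B i j) mod n else 0)"

end

theory Submission
  imports Defs
begin

text \<open>Entrywise, (a*b)*c = t^2 a + t u b + u c modulo n, and t^2 = u makes this
  symmetric in a and c; idempotency is (t + u) a = a for a reduced residue a.\<close>

lemma affine_mod_left_invertive:
  fixes n t u a b c :: int
  assumes "t^2 mod n = u mod n"
  shows "(t * ((t*a + u*b) mod n) + u*c) mod n = (t * ((t*c + u*b) mod n) + u*a) mod n"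
proof -
  have reduce: "(t * (x mod n) + y) mod n = (t*x + y) mod n" for x y
    by (metis mod_add_left_eq mod_mult_right_eq)
  have square_eq: "(t^2 * x + y) mod n = (u * x + y) mod n" for x y
    using mod_add_cong[OF mod_mult_cong[OF assms refl] refl] .
  have "(t * ((t*a + u*b) mod n) + u*c) mod n = (t * (t*a + u*b) + u*c) mod n"
    by (rule reduce)
  also have "\<dots> = (t^2 * a + (t*u*b + u*c)) mod n"
    by (simp add: power2_eq_square algebra_simps)
  also have "\<dots> = (u*a + (t*u*b + u*c)) mod n"
    by (rule square_eq)
  also have "\<dots> = (u*c + (t*u*b + u*a)) mod n"
    by (simp add: algebra_simps)
  also have "\<dots> = (t^2 * c + (t*u*b + u*a)) mod n"
    by (rule square_eq[symmetric])
  also have "\<dots> = (t * (t*c + u*b) + u*a) mod n"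
    by (simp add: power2_eq_square algebra_simps)
  also have "\<dots> = (t * ((t*c + u*b) mod n) + u*a) mod n"
    by (rule reduce[symmetric])
  finally show ?thesis .
qed

lemma affine_mod_idem:
  fixes n t u a :: int
  assumes "(t + u) mod n = 1 mod n" and "0 \<le> a" and "a < n"
  shows "(t*a + u*a) mod n = a"
proof -
  have "(t*a + u*a) mod n = (((t + u) mod n) * a) mod n"
    by (simp only: distrib_right mod_mult_left_eq)
  also have "\<dots> = a mod n"
    using assms(1) by (metis mod_mult_left_eq mult_1)
  also have "\<dots> = a"
    using assms(2,3) by (rule mod_pos_pos_trivial)
  finally show ?thesis .
qed

lemma zmat_op_closed:
  assumes "n > 0"
  shows "zmat_op n m k t u A B \<in> zmats n m k"
  using assms unfolding zmats_def zmat_op_def by auto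

lemma zmat_op_left_invertive:
  assumes "t^2 mod n = u mod n"
  shows "zmat_op n m k t u (zmat_op n m k t u A B) C = zmat_op n m k t u (zmat_op n m k t u C B) A"
proof (intro ext)
  fix i j
  show "zmat_op n m k t u (zmat_op n m k t u A B) C i j = zmat_op n m k t u (zmat_op n m k t u C B) A i j"
    using affine_mod_left_invertive[OF assms] by (simp add: zmat_op_def)
qed

lemma zmat_op_idem:
  assumes "(t + u) mod n = 1 mod n" and "A \<in> zmats n m k"
  shows "zmat_op n m k t u A A = A"
proof (intro ext)
  fix i j
  show "zmat_op n m k t u A A i j = A i j"
    using assms affine_mod_idem[OF assms(1)] by (simp add: zmat_op_def zmats_def)
qed

theorem mainTheorem8:
  fixes n t u :: int and m k :: nat
  assumes "n \<ge> 3" and "m \<ge> 1" and "k \<ge> 1"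
    and "0 \<le> t" and "t < n" and "0 \<le> u" and "u < n"
    and "t^2 mod n = u mod n"
    and "(t + u) mod n = 1 mod n"
  shows "ag_band (zmats n m k) (zmat_op n m k t u)"
  unfolding ag_band_def ag_groupoid_def
  using zmat_op_closed[of n] zmat_op_left_invertive[OF assms(8)] zmat_op_idem[OF assms(9)] assms(1)
  by simp

end
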